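(* Let $p$ be an odd prime. If $M$ is a finite $A$-module (finite as a set), then $\Phi_nM=0$ for some $n$.
   Context: $A$ is the ring of degree zero stable operations in $p$-local complex $K$-theory. Fix $q$ primitive mod $p^2$, $\Psi^q\in A$ the Adams operation, $q_i=q^{(-1)^i\lfloor i/2\rfloor}$, $\Theta_n(X)=\prod_{i=1}^n(X-q_i)\in\mathbb{Z}_{(p)}[X]$, and $\Phi_n=\Theta_n(\Psi^q)\in A$. *)

theory Defs
  imports "HOL-Computational_Algebra.Polynomial" "HOL-Number_Theory.Number_Theory"
    "HOL-Algebra.Module"
begin

definition zp :: "nat \<Rightarrow> rat set" where
  "zp p = {r. \<not> (int p dvd snd (quotient_of r))}"

definition qi :: "int \<Rightarrow> nat \<Rightarrow> rat" where
  "qi q i = (if even i then (of_int q) ^ (i div 2) else (inverse (of_int q)) ^ (i div 2))"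

definition Theta :: "int \<Rightarrow> nat \<Rightarrow> rat poly" where
  "Theta q n = (\<Prod>i\<in>{1..n}. [:- qi q i, 1:])"

text \<open>Model of the ring A of degree zero stable operations in p-local K-theory:
  the inverse limit of Z_(p)[X]/(Theta_n(X)), with Psi^q corresponding to X.\<close>
definition A_carrier :: "nat \<Rightarrow> int \<Rightarrow> (nat \<Rightarrow> rat poly) set" where
  "A_carrier p q = {f. \<forall>n. (\<forall>k. Polynomial.coeff (f n) k \<in> zp p) \<and> (f n = 0 \<or> Polynomial.degree (f n) < n)
      \<and> f (Suc n) mod Theta q n = f n}"

definition A_ring :: "nat \<Rightarrow> int \<Rightarrow> (nat \<Rightarrow> rat poly) ring" where
  "A_ring p q = \<lparr>carrier = A_carrier p q,
      mult = (\<lambda>f g n. (f n * g n) mod Theta q n),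
      one = (\<lambda>n. 1 mod Theta q n),
      zero = (\<lambda>n. 0),
      add = (\<lambda>f g n. f n + g n)\<rparr>"

text \<open>Psi^q = X and Phi_n = Theta_n(Psi^q) in A.\<close>
definition Psi_q :: "int \<Rightarrow> nat \<Rightarrow> rat poly" where
  "Psi_q q = (\<lambda>k. [:0, 1:] mod Theta q k)"

definition Phi :: "int \<Rightarrow> nat \<Rightarrow> nat \<Rightarrow> rat poly" where
  "Phi q n = (\<lambda>k. Theta q n mod Theta q k)"

end

theory Submission
  imports Defs
begin

(*
  Write Theta_{2(p-1)(j+1)} = Theta_{2(p-1)j} B_j, where B_j is the product of the 2(p-1) factors
  X - q_i with 2(p-1)j < i <= 2(p-1)(j+1). As p does not divide q, Fermat's little theorem makes every
  q_x congruent modulo p to a root of B_j, so B_j(q_x) lies in p Z_(p) for all x. Hence 1 - B_j^c takes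
  unit values at all q_x, and such an element of Z_(p)[X] is invertible in A: an inverse modulo
  Theta_n is lifted to one modulo Theta_{n+1} by correcting it at the single new root, and inverses at
  different levels are compatible because they are unique. On the finite module M two powers of B_j
  act alike, B_j^a = B_j^(a+c), and then B_j^a (1 - B_j^c) = 0 forces B_j^a M = 0. Finally the images
  Phi_{2(p-1)j} M form a descending chain of finite sets; where it becomes stationary B_j acts
  surjectively on it while a power of B_j kills it, so the image is zero.
*)

section \<open>Finite modules\<close>

lemma finite_descending_chain_stationary:
  assumes "finite (A 0)" and "\<And>j. A (Suc j) \<subseteq> A j"
  shows "\<exists>j. A (Suc j) = A j"
proof (rule ccontr)
  assume "\<nexists>j. A (Suc j) = A j"
  then have strict: "A (Suc j) \<subset> A j" for j using assms(2) by blast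
  have "A j \<subseteq> A 0" for j
    by (induction j) (use assms(2) in blast)+
  then have fin: "finite (A j)" for j using assms(1) finite_subset by blast
  have "card (A j) + j \<le> card (A 0)" for j
  proof (induction j)
    case (Suc j)
    then show ?case using psubset_card_mono[OF fin strict, of j] by simp
  qed simp
  from this[of "Suc (card (A 0))"] show False by simp
qed

lemma (in module) pow_smult_eventually_zero:
  assumes fin: "finite (carrier M)" and a: "a \<in> carrier R"
    and units: "\<And>c :: nat. 0 < c \<Longrightarrow> \<one> \<ominus> a [^] c \<in> Units R"
  shows "\<exists>k :: nat. \<forall>m \<in> carrier M. a [^] k \<odot>\<^bsub>M\<^esub> m = \<zero>\<^bsub>M\<^esub>"
proof -
  \<comment> \<open>pigeonhole: only finitely many maps \<open>M \<rightarrow> M\<close> exist, so two powers of \<open>a\<close> act alike\<close>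
  define F where "F k = restrict (\<lambda>m. a [^] k \<odot>\<^bsub>M\<^esub> m) (carrier M)" for k :: nat
  have "range F \<subseteq> carrier M \<rightarrow>\<^sub>E carrier M" using a by (auto simp: F_def)
  moreover have "finite (carrier M \<rightarrow>\<^sub>E carrier M)" using fin by (simp add: finite_PiE)
  ultimately have "\<not> inj F" using finite_subset finite_imageD infinite_UNIV_nat by blast
  then obtain k l where "k < l" "F k = F l" unfolding inj_def by (metis linorder_neqE_nat)
  define c where "c = l - k"
  have l: "l = c + k" and "0 < c" using \<open>k < l\<close> by (simp_all add: c_def)
  define u where "u = \<one> \<ominus> a [^] c"
  have u: "u \<in> Units R" unfolding u_def using units \<open>0 < c\<close> .
  have "(u \<otimes> a [^] k) \<odot>\<^bsub>M\<^esub> m = \<zero>\<^bsub>M\<^esub>" if m: "m \<in> carrier M" for m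
  proof -
    have "u \<otimes> a [^] k = a [^] k \<oplus> \<ominus> (a [^] l)"
      unfolding u_def l using a by (simp add: a_minus_def R.l_distr R.l_minus R.nat_pow_mult)
    then have "(u \<otimes> a [^] k) \<odot>\<^bsub>M\<^esub> m = a [^] k \<odot>\<^bsub>M\<^esub> m \<oplus>\<^bsub>M\<^esub> \<ominus>\<^bsub>M\<^esub> (a [^] l \<odot>\<^bsub>M\<^esub> m)"
      using a m by (simp add: smult_l_distr smult_l_minus)
    moreover have "a [^] l \<odot>\<^bsub>M\<^esub> m = a [^] k \<odot>\<^bsub>M\<^esub> m"
      using fun_cong[OF \<open>F k = F l\<close>, of m] m by (simp add: F_def)
    ultimately show ?thesis using a m by (simp add: M.r_neg)
  qed
  moreover have "a [^] k \<odot>\<^bsub>M\<^esub> m = inv u \<odot>\<^bsub>M\<^esub> ((u \<otimes> a [^] k) \<odot>\<^bsub>M\<^esub> m)" if "m \<in> carrier M" for m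
  proof -
    have uc: "u \<in> carrier R" "inv u \<in> carrier R" using u by auto
    have "a [^] k \<odot>\<^bsub>M\<^esub> m = (inv u \<otimes> (u \<otimes> a [^] k)) \<odot>\<^bsub>M\<^esub> m"
      using u uc a by (simp add: R.m_assoc[symmetric] R.Units_l_inv)
    also have "\<dots> = inv u \<odot>\<^bsub>M\<^esub> ((u \<otimes> a [^] k) \<odot>\<^bsub>M\<^esub> m)"
      using uc a that by (simp add: smult_assoc1)
    finally show ?thesis .
  qed
  ultimately have "\<forall>m \<in> carrier M. a [^] k \<odot>\<^bsub>M\<^esub> m = \<zero>\<^bsub>M\<^esub>"
    using u by simp
  then show ?thesis ..
qed

lemma (in module) smult_eq_zero_of_descending_chain:
  assumes fin: "finite (carrier M)"
    and e: "\<And>j. e j \<in> carrier R" and b: "\<And>j. b j \<in> carrier R"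
    and e_Suc: "\<And>j. e (Suc j) = b j \<otimes> e j"
    and nil: "\<And>j. \<exists>k :: nat. \<forall>m \<in> carrier M. b j [^] k \<odot>\<^bsub>M\<^esub> m = \<zero>\<^bsub>M\<^esub>"
  shows "\<exists>j. \<forall>m \<in> carrier M. e j \<odot>\<^bsub>M\<^esub> m = \<zero>\<^bsub>M\<^esub>"
proof -
  define W where "W j = (\<lambda>m. e j \<odot>\<^bsub>M\<^esub> m) ` carrier M" for j
  have W: "W j \<subseteq> carrier M" for j unfolding W_def using e by auto
  have W_Suc: "W (Suc j) = (\<lambda>w. b j \<odot>\<^bsub>M\<^esub> w) ` W j" for j
    unfolding W_def e_Suc image_image using e b by (intro image_cong) (simp_all add: smult_assoc1)
  have "W (Suc j) \<subseteq> W j" for j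
  proof
    fix x assume "x \<in> W (Suc j)"
    then obtain m where m: "m \<in> carrier M" "x = e (Suc j) \<odot>\<^bsub>M\<^esub> m" unfolding W_def by blast
    have "e (Suc j) = e j \<otimes> b j" unfolding e_Suc using b e by (rule R.m_comm)
    then have "x = e j \<odot>\<^bsub>M\<^esub> (b j \<odot>\<^bsub>M\<^esub> m)" using m e b by (simp add: smult_assoc1)
    then show "x \<in> W j" unfolding W_def using m(1) b by blast
  qed
  moreover have "finite (W 0)" using fin unfolding W_def by simp
  ultimately obtain j where j: "W (Suc j) = W j"
    using finite_descending_chain_stationary[of W] by blast
  obtain k :: nat where k: "\<forall>m \<in> carrier M. b j [^] k \<odot>\<^bsub>M\<^esub> m = \<zero>\<^bsub>M\<^esub>" using nil by blast
  \<comment> \<open>on the stable term \<open>b j\<close> acts surjectively, but some power of it acts as zero\<close>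
  have stable: "W j = (\<lambda>w. b j [^] i \<odot>\<^bsub>M\<^esub> w) ` W j" for i :: nat
  proof (induction i)
    case 0
    have "(\<lambda>w. b j [^] (0 :: nat) \<odot>\<^bsub>M\<^esub> w) ` W j = id ` W j"
      using W[of j] by (intro image_cong) auto
    then show ?case by simp
  next
    case (Suc i)
    have "(\<lambda>w. b j [^] Suc i \<odot>\<^bsub>M\<^esub> w) ` W j = (\<lambda>w. b j [^] i \<odot>\<^bsub>M\<^esub> w) ` W (Suc j)"
      unfolding W_Suc image_image
    proof (intro image_cong refl)
      fix w assume "w \<in> W j"
      then have "w \<in> carrier M" using W by blast
      then show "b j [^] Suc i \<odot>\<^bsub>M\<^esub> w = b j [^] i \<odot>\<^bsub>M\<^esub> (b j \<odot>\<^bsub>M\<^esub> w)"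
        using b by (simp add: smult_assoc1)
    qed
    also have "\<dots> = W j"
      unfolding j by (rule Suc.IH[symmetric])
    finally show ?case by (rule sym)
  qed
  have "x = \<zero>\<^bsub>M\<^esub>" if "x \<in> W j" for x
  proof -
    from that have "x \<in> (\<lambda>w. b j [^] k \<odot>\<^bsub>M\<^esub> w) ` W j"
      by (subst (asm) stable[of k])
    then obtain w where "w \<in> W j" "x = b j [^] k \<odot>\<^bsub>M\<^esub> w" by (rule imageE)
    then show ?thesis using k W by blast
  qed
  then show ?thesis unfolding W_def by blast
qed

section \<open>The polynomials \<open>Theta\<close> and the ring \<open>A\<close>\<close>

definition Theta_block :: "int \<Rightarrow> nat \<Rightarrow> nat \<Rightarrow> rat poly" where
  "Theta_block q m k = (\<Prod>i\<in>{m+1..m+k}. [:- qi q i, 1:])"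

lemma Theta_0 [simp]: "Theta q 0 = 1"
  unfolding Theta_def by simp

lemma Theta_Suc: "Theta q (Suc n) = Theta q n * [:- qi q (Suc n), 1:]"
  unfolding Theta_def by (simp add: prod.nat_ivl_Suc' mult.commute)

lemma Theta_add: "Theta q (m + k) = Theta q m * Theta_block q m k"
  unfolding Theta_block_def
  by (induction k) (simp_all add: Theta_Suc prod.nat_ivl_Suc' mult_ac del: mult_pCons_right)

lemma lead_coeff_Theta [simp]: "lead_coeff (Theta q n) = 1"
  unfolding Theta_def lead_coeff_prod by simp

lemma Theta_nonzero [simp]: "Theta q n \<noteq> 0"
  using lead_coeff_Theta[of q n] by (metis leading_coeff_0_iff zero_neq_one)

lemma degree_Theta [simp]: "degree (Theta q n) = n"
  unfolding Theta_def by (simp add: degree_prod_eq_sum_degree)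

lemma Theta_dvd: "m \<le> n \<Longrightarrow> Theta q m dvd Theta q n"
  unfolding Theta_def by (rule prod_dvd_prod_subset) auto

definition A_of_poly :: "int \<Rightarrow> rat poly \<Rightarrow> nat \<Rightarrow> rat poly" where
  "A_of_poly q f = (\<lambda>n. f mod Theta q n)"

lemma carrier_A_ring: "carrier (A_ring p q) = A_carrier p q"
  unfolding A_ring_def by simp

lemma mult_A_ring [simp]: "f \<otimes>\<^bsub>A_ring p q\<^esub> g = (\<lambda>n. (f n * g n) mod Theta q n)"
  unfolding A_ring_def by simp

lemma add_A_ring [simp]: "f \<oplus>\<^bsub>A_ring p q\<^esub> g = (\<lambda>n. f n + g n)"
  unfolding A_ring_def by simp

lemma one_A_ring: "\<one>\<^bsub>A_ring p q\<^esub> = A_of_poly q 1"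
  unfolding A_ring_def A_of_poly_def by simp

lemma zero_A_ring [simp]: "\<zero>\<^bsub>A_ring p q\<^esub> = (\<lambda>n. 0)"
  unfolding A_ring_def by simp

lemma Phi_eq_A_of_poly: "Phi q n = A_of_poly q (Theta q n)"
  unfolding Phi_def A_of_poly_def ..

lemma A_of_poly_mult: "A_of_poly q f \<otimes>\<^bsub>A_ring p q\<^esub> A_of_poly q g = A_of_poly q (f * g)"
  unfolding A_of_poly_def by (simp add: mod_mult_eq)

lemma A_of_poly_add: "A_of_poly q f \<oplus>\<^bsub>A_ring p q\<^esub> A_of_poly q g = A_of_poly q (f + g)"
  unfolding A_of_poly_def by (simp add: poly_mod_add_left)

lemma A_of_poly_pow: "A_of_poly q f [^]\<^bsub>A_ring p q\<^esub> (k :: nat) = A_of_poly q (f ^ k)"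
proof (induction k)
  case 0
  show ?case by (simp add: nat_pow_def one_A_ring)
next
  case (Suc k)
  have "A_of_poly q f [^]\<^bsub>A_ring p q\<^esub> Suc k
      = A_of_poly q f [^]\<^bsub>A_ring p q\<^esub> k \<otimes>\<^bsub>A_ring p q\<^esub> A_of_poly q f"
    unfolding nat_pow_def by simp
  also have "\<dots> = A_of_poly q (f ^ Suc k)"
    by (simp only: Suc.IH A_of_poly_mult power_Suc2)
  finally show ?case .
qed

lemma inverse_mod_unique:
  fixes m h v w :: "'a :: comm_ring_1"
  assumes "m dvd h * v - 1" "m dvd h * w - 1"
  shows "m dvd v - w"
proof -
  have "v - w = w * (h * v - 1) - v * (h * w - 1)" by (simp add: algebra_simps)
  then show ?thesis using assms by (simp add: dvd_diff)
qed

section \<open>The \<open>p\<close>-local integers\<close>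

definition zp_poly :: "nat \<Rightarrow> rat poly set" where
  "zp_poly p = {f. \<forall>k. Polynomial.coeff f k \<in> zp p}"

definition pzp :: "nat \<Rightarrow> rat set" where
  "pzp p = (\<lambda>s. of_nat p * s) ` zp p"

context
  fixes p :: nat
  assumes p: "prime p"
begin

lemma zp_iff: "r \<in> zp p \<longleftrightarrow> (\<exists>a b. b \<noteq> 0 \<and> \<not> int p dvd b \<and> r = of_int a / of_int b)"
proof
  assume "r \<in> zp p"
  obtain a b where ab: "quotient_of r = (a, b)" by (cases "quotient_of r")
  then have "b > 0" "r = of_int a / of_int b" using quotient_of_denom_pos quotient_of_div by auto
  with \<open>r \<in> zp p\<close> ab show "\<exists>a b. b \<noteq> 0 \<and> \<not> int p dvd b \<and> r = of_int a / of_int b"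
    unfolding zp_def by (intro exI[of _ a] exI[of _ b]) auto
next
  assume "\<exists>a b. b \<noteq> 0 \<and> \<not> int p dvd b \<and> r = of_int a / of_int b"
  then obtain a b where ab: "b \<noteq> 0" "\<not> int p dvd b" "r = of_int a / of_int b" by blast
  obtain a' b' where ab': "quotient_of r = (a', b')" by (cases "quotient_of r")
  then have "b' > 0" and r: "r = of_int a' / of_int b'" and "coprime a' b'"
    using quotient_of_denom_pos quotient_of_div quotient_of_coprime by auto
  have "of_int (a' * b) = (of_int (a * b') :: rat)"
    using ab(1,3) r \<open>b' > 0\<close> by (simp add: field_simps)
  then have "b' dvd a' * b" by (metis dvd_triv_right of_int_eq_iff)
  with \<open>coprime a' b'\<close> have "b' dvd b" by (metis coprime_commute coprime_dvd_mult_right_iff)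
  with ab(2) have "\<not> int p dvd b'" using dvd_trans by blast
  with ab' show "r \<in> zp p" unfolding zp_def by simp
qed

lemma zp_intro: "b \<noteq> 0 \<Longrightarrow> \<not> int p dvd b \<Longrightarrow> r = of_int a / of_int b \<Longrightarrow> r \<in> zp p"
  using zp_iff by blast

lemma zp_of_int [simp]: "of_int a \<in> zp p"
  using zp_intro[of 1 _ a] prime_gt_1_nat[OF p] by simp

lemma zp_0 [simp]: "0 \<in> zp p"
  using zp_of_int[of 0] by simp

lemma zp_1 [simp]: "1 \<in> zp p"
  using zp_of_int[of 1] by simp

lemma zp_add [intro]:
  assumes "x \<in> zp p" "y \<in> zp p"
  shows "x + y \<in> zp p"
proof -
  obtain a b c d where "b \<noteq> 0" "\<not> int p dvd b" "x = of_int a / of_int b"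
    "d \<noteq> 0" "\<not> int p dvd d" "y = of_int c / of_int d"
    using assms zp_iff by metis
  then show ?thesis
    by (intro zp_intro[of "b * d" _ "a * d + c * b"]) (simp_all add: p prime_dvd_mult_iff add_frac_eq)
qed

lemma zp_mult [intro]:
  assumes "x \<in> zp p" "y \<in> zp p"
  shows "x * y \<in> zp p"
proof -
  obtain a b c d where "b \<noteq> 0" "\<not> int p dvd b" "x = of_int a / of_int b"
    "d \<noteq> 0" "\<not> int p dvd d" "y = of_int c / of_int d"
    using assms zp_iff by metis
  then show ?thesis
    by (intro zp_intro[of "b * d" _ "a * c"]) (simp_all add: p prime_dvd_mult_iff)
qed

lemma zp_uminus [intro]: "x \<in> zp p \<Longrightarrow> - x \<in> zp p"
  using zp_mult[OF zp_of_int[of "-1"]] by simp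

lemma zp_diff [intro]: "x \<in> zp p \<Longrightarrow> y \<in> zp p \<Longrightarrow> x - y \<in> zp p"
  using zp_add[OF _ zp_uminus] by simp

lemma zp_power [intro]: "x \<in> zp p \<Longrightarrow> x ^ n \<in> zp p"
  by (induction n) (simp_all add: zp_mult)

lemma zp_sum [intro]: "(\<And>i. i \<in> A \<Longrightarrow> f i \<in> zp p) \<Longrightarrow> sum f A \<in> zp p"
  by (induction A rule: infinite_finite_induct) (simp_all add: zp_add)

lemma zp_prod [intro]: "(\<And>i. i \<in> A \<Longrightarrow> f i \<in> zp p) \<Longrightarrow> prod f A \<in> zp p"
  by (induction A rule: infinite_finite_induct) (simp_all add: zp_mult)

lemma zp_inverse_of_int: "\<not> int p dvd a \<Longrightarrow> inverse (of_int a) \<in> zp p"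
  by (intro zp_intro[of a _ 1]) (auto simp: field_simps)

lemma pzp_iff: "x \<in> pzp p \<longleftrightarrow> (\<exists>s \<in> zp p. x = of_nat p * s)"
  unfolding pzp_def by auto

lemma pzp_of_int:
  assumes "int p dvd a"
  shows "of_int a \<in> pzp p"
proof -
  obtain k where "a = int p * k" using assms by (elim dvdE)
  then show ?thesis unfolding pzp_iff by (intro bexI[of _ "of_int k"]) simp_all
qed

lemma pzp_mult [intro]: "x \<in> pzp p \<Longrightarrow> y \<in> zp p \<Longrightarrow> x * y \<in> pzp p"
  unfolding pzp_iff by (metis mult.assoc zp_mult)

lemma pzp_uminus [intro]: "x \<in> pzp p \<Longrightarrow> - x \<in> pzp p"
  using pzp_mult[of x "-1"] zp_of_int[of "-1"] by simp

lemma pzp_power [intro]: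
  assumes "x \<in> pzp p" "0 < c"
  shows "x ^ c \<in> pzp p"
proof -
  obtain s m where "s \<in> zp p" "x = of_nat p * s" "c = Suc m"
    using assms by (auto simp: pzp_iff gr0_conv_Suc)
  then have "x ^ c = of_nat p * (of_nat p ^ m * s ^ c)" "of_nat p ^ m * s ^ c \<in> zp p"
    using zp_of_int[of "int p"] by (simp_all add: power_mult_distrib zp_mult zp_power)
  then show ?thesis unfolding pzp_iff by blast
qed

lemma one_minus_pzp_invertible:
  assumes "x \<in> pzp p"
  shows "1 - x \<noteq> 0" "inverse (1 - x) \<in> zp p"
proof -
  obtain s where "s \<in> zp p" "x = of_nat p * s"
    using assms unfolding pzp_iff by blast
  then obtain a b where ab: "b \<noteq> 0" "\<not> int p dvd b" "x = of_nat p * (of_int a / of_int b)"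
    unfolding zp_iff by blast
  have "b = (b - int p * a) + int p * a" by simp
  then have num: "\<not> int p dvd b - int p * a"
    using ab(2) by (metis dvd_add dvd_triv_left)
  then have "b - int p * a \<noteq> 0" by auto
  have frac: "1 - x = of_int (b - int p * a) / of_int b"
    using ab(1,3) by (simp add: field_simps)
  show "1 - x \<noteq> 0"
    unfolding frac using ab(1) \<open>b - int p * a \<noteq> 0\<close>
    by (simp only: divide_eq_0_iff of_int_eq_0_iff) simp
  show "inverse (1 - x) \<in> zp p"
    unfolding frac inverse_divide using \<open>b - int p * a \<noteq> 0\<close> num by (rule zp_intro) (rule refl)
qed

lemma zp_poly_0 [simp]: "0 \<in> zp_poly p"
  unfolding zp_poly_def by simp

lemma zp_poly_1 [simp]: "1 \<in> zp_poly p"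
  unfolding zp_poly_def by (simp add: coeff_1)

lemma zp_poly_pCons [intro]: "c \<in> zp p \<Longrightarrow> f \<in> zp_poly p \<Longrightarrow> pCons c f \<in> zp_poly p"
  unfolding zp_poly_def by (auto simp: coeff_pCons split: nat.splits)

lemma zp_poly_diff [intro]: "f \<in> zp_poly p \<Longrightarrow> g \<in> zp_poly p \<Longrightarrow> f - g \<in> zp_poly p"
  unfolding zp_poly_def by auto

lemma zp_poly_smult [intro]: "c \<in> zp p \<Longrightarrow> f \<in> zp_poly p \<Longrightarrow> Polynomial.smult c f \<in> zp_poly p"
  unfolding zp_poly_def by auto

lemma zp_poly_mult [intro]: "f \<in> zp_poly p \<Longrightarrow> g \<in> zp_poly p \<Longrightarrow> f * g \<in> zp_poly p"
  unfolding zp_poly_def by (auto simp: coeff_mult)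

lemma zp_poly_power [intro]: "f \<in> zp_poly p \<Longrightarrow> f ^ n \<in> zp_poly p"
  by (induction n) auto

lemma zp_poly_prod [intro]: "(\<And>i. i \<in> A \<Longrightarrow> f i \<in> zp_poly p) \<Longrightarrow> prod f A \<in> zp_poly p"
  by (induction A rule: infinite_finite_induct) auto

lemma poly_in_zp: "f \<in> zp_poly p \<Longrightarrow> x \<in> zp p \<Longrightarrow> poly f x \<in> zp p"
  unfolding zp_poly_def poly_altdef by auto

lemma zp_poly_divmod_monic:
  assumes g: "g \<in> zp_poly p" "lead_coeff g = 1"
  shows "f \<in> zp_poly p \<Longrightarrow> f div g \<in> zp_poly p \<and> f mod g \<in> zp_poly p"
proof (induction "degree f" arbitrary: f rule: less_induct)
  case less
  show ?case
  proof (cases "f = 0 \<or> degree f < degree g")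
    case True
    then show ?thesis using less.prems by (auto simp: div_poly_less mod_poly_less)
  next
    case False
    then have "f \<noteq> 0" and dg: "degree g \<le> degree f" by auto
    define c where "c = Polynomial.monom (lead_coeff f) (degree f - degree g)"
    define f' where "f' = f - c * g"
    have c: "c \<in> zp_poly p" unfolding c_def using less.prems by (auto simp: zp_poly_def)
    have f': "f' \<in> zp_poly p" unfolding f'_def using c less.prems g by auto
    have "Polynomial.coeff f' (degree f) = 0"
      unfolding f'_def c_def using dg g by (simp add: coeff_monom_mult)
    moreover have "degree f' \<le> degree f"
      unfolding f'_def c_def using dg \<open>f \<noteq> 0\<close>
      by (intro degree_diff_le order.trans[OF degree_mult_le]) (auto simp: degree_monom_eq)
    ultimately have "f' = 0 \<or> degree f' < degree f"
      by (metis le_neq_implies_less leading_coeff_0_iff)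
    then have IH: "f' div g \<in> zp_poly p \<and> f' mod g \<in> zp_poly p"
      using less.hyps f' by auto
    have f: "f = f' + c * g" unfolding f'_def by simp
    have "g \<noteq> 0" using g(2) by auto
    then have "f div g = c + f' div g" unfolding f by (rule div_mult_self1)
    moreover have "f mod g = f' mod g" unfolding f by simp
    ultimately show ?thesis using IH c by (auto simp: zp_poly_def)
  qed
qed

section \<open>Elements of \<open>A\<close> given by polynomials over \<open>Z_(p)\<close>\<close>

context
  fixes q :: int
  assumes q: "\<not> int p dvd q"
begin

lemma qi_in_zp [simp]: "qi q i \<in> zp p"
  unfolding qi_def using zp_inverse_of_int[OF q] by (simp add: zp_power)

lemma Theta_in_zp_poly [simp]: "Theta q n \<in> zp_poly p"
  unfolding Theta_def by (intro zp_poly_prod zp_poly_pCons zp_uminus) simp_all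

lemma Theta_block_in_zp_poly [simp]: "Theta_block q m k \<in> zp_poly p"
  unfolding Theta_block_def by (intro zp_poly_prod zp_poly_pCons zp_uminus) simp_all

lemma zp_poly_mod_Theta: "f \<in> zp_poly p \<Longrightarrow> f mod Theta q n \<in> zp_poly p"
  using zp_poly_divmod_monic[OF Theta_in_zp_poly lead_coeff_Theta] by blast

lemma mod_Theta_in_A_carrier:
  assumes "\<And>n. u n \<in> zp_poly p" "\<And>n. Theta q n dvd u (Suc n) - u n"
  shows "(\<lambda>n. u n mod Theta q n) \<in> A_carrier p q"
proof -
  have "u (Suc n) mod Theta q (Suc n) mod Theta q n = u n mod Theta q n" for n
  proof -
    have "u (Suc n) mod Theta q (Suc n) mod Theta q n = u (Suc n) mod Theta q n"
      by (rule mod_mod_cancel) (simp add: Theta_dvd)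
    also have "\<dots> = u n mod Theta q n"
      using assms(2) by (simp add: mod_eq_dvd_iff)
    finally show ?thesis .
  qed
  moreover have "u n mod Theta q n = 0 \<or> degree (u n mod Theta q n) < n" for n
    using degree_mod_less[OF Theta_nonzero, of "u n" q n] by simp
  ultimately show ?thesis
    using zp_poly_mod_Theta[OF assms(1)] unfolding A_carrier_def zp_poly_def by blast
qed

lemma A_of_poly_in_carrier: "f \<in> zp_poly p \<Longrightarrow> A_of_poly q f \<in> carrier (A_ring p q)"
  unfolding A_of_poly_def carrier_A_ring using mod_Theta_in_A_carrier[of "\<lambda>_. f"] by simp

lemma exists_inverse_mod_Theta:
  assumes h: "h \<in> zp_poly p"
    and unit: "\<And>i. poly h (qi q i) \<noteq> 0 \<and> inverse (poly h (qi q i)) \<in> zp p"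
  shows "\<exists>v \<in> zp_poly p. Theta q n dvd h * v - 1"
proof (induction n)
  case 0
  show ?case by (intro bexI[of _ 0]) simp_all
next
  case (Suc n)
  then obtain v w where v: "v \<in> zp_poly p" and w: "h * v - 1 = Theta q n * w"
    by (auto elim: dvdE)
  define a where "a = qi q (Suc n)"
  define c where "c = poly w a * inverse (poly h a)"
  have "h * v - 1 \<in> zp_poly p" using h v by (intro zp_poly_diff zp_poly_mult) simp_all
  moreover have "w = (h * v - 1) div Theta q n" unfolding w by simp
  ultimately have "w \<in> zp_poly p"
    using zp_poly_divmod_monic[OF Theta_in_zp_poly lead_coeff_Theta] by auto
  then have c: "c \<in> zp p" unfolding c_def a_def using unit poly_in_zp by auto
  \<comment> \<open>correcting \<open>v\<close> by a multiple of \<open>Theta q n\<close> kills the residue at the new root \<open>a\<close>\<close>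
  have "h * (v - Polynomial.smult c (Theta q n)) - 1 = (h * v - 1) - Theta q n * Polynomial.smult c h"
    by (simp add: algebra_simps)
  also have "\<dots> = Theta q n * (w - Polynomial.smult c h)"
    unfolding w by (simp add: right_diff_distrib)
  finally have v': "h * (v - Polynomial.smult c (Theta q n)) - 1 = Theta q n * (w - Polynomial.smult c h)" .
  have "poly (w - Polynomial.smult c h) a = 0"
    unfolding c_def using unit[of "Suc n"] by (simp add: a_def)
  then have "[:- a, 1:] dvd w - Polynomial.smult c h"
    using poly_eq_0_iff_dvd by blast
  then have "Theta q n * [:- a, 1:] dvd Theta q n * (w - Polynomial.smult c h)"
    by (rule mult_dvd_mono[OF dvd_refl])
  then have "Theta q (Suc n) dvd h * (v - Polynomial.smult c (Theta q n)) - 1"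
    unfolding v' Theta_Suc a_def[symmetric] .
  then show ?case
    using v c by (intro bexI[of _ "v - Polynomial.smult c (Theta q n)"] zp_poly_diff zp_poly_smult) simp_all
qed

lemma A_of_poly_in_Units:
  assumes h: "h \<in> zp_poly p"
    and unit: "\<And>i. poly h (qi q i) \<noteq> 0 \<and> inverse (poly h (qi q i)) \<in> zp p"
  shows "A_of_poly q h \<in> Units (A_ring p q)"
proof -
  obtain v where v: "\<And>n. v n \<in> zp_poly p" "\<And>n. Theta q n dvd h * v n - 1"
    using exists_inverse_mod_Theta[OF h unit] by metis
  define u where "u = (\<lambda>n. v n mod Theta q n)"
  \<comment> \<open>inverses modulo \<open>Theta q n\<close> are unique, so the levels are automatically compatible\<close>
  have "Theta q n dvd v (Suc n) - v n" for n
    using inverse_mod_unique[OF dvd_trans[OF Theta_dvd v(2)] v(2)] by simp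
  then have u: "u \<in> carrier (A_ring p q)"
    unfolding u_def carrier_A_ring using mod_Theta_in_A_carrier v(1) by simp
  have inv: "h * v n mod Theta q n = 1 mod Theta q n" for n
    using v(2) by (simp add: mod_eq_dvd_iff)
  have "A_of_poly q h \<otimes>\<^bsub>A_ring p q\<^esub> u = \<one>\<^bsub>A_ring p q\<^esub>"
    unfolding A_of_poly_def u_def one_A_ring mult_A_ring by (simp add: mod_mult_eq inv)
  moreover have "u \<otimes>\<^bsub>A_ring p q\<^esub> A_of_poly q h = \<one>\<^bsub>A_ring p q\<^esub>"
    unfolding A_of_poly_def u_def one_A_ring mult_A_ring by (simp add: mod_mult_eq inv mult.commute)
  ultimately show ?thesis
    unfolding Units_def using u A_of_poly_in_carrier[OF h] by auto
qed

lemma A_of_poly_diff: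
  assumes "cring (A_ring p q)" "f \<in> zp_poly p" "g \<in> zp_poly p"
  shows "A_of_poly q (f - g) = A_of_poly q f \<ominus>\<^bsub>A_ring p q\<^esub> A_of_poly q g"
proof -
  interpret A: cring "A_ring p q" by (rule assms(1))
  have "- g \<in> zp_poly p" using zp_poly_diff[OF zp_poly_0 assms(3)] by simp
  then have "\<ominus>\<^bsub>A_ring p q\<^esub> A_of_poly q g = A_of_poly q (- g)"
    by (intro A.minus_equality) (simp_all add: A_of_poly_add A_of_poly_in_carrier assms(3),
        simp add: A_of_poly_def)
  then show ?thesis
    unfolding a_minus_def by (simp only: A_of_poly_add) simp
qed

lemma one_minus_pow_in_Units:
  fixes c :: nat
  assumes "cring (A_ring p q)" "g \<in> zp_poly p" "\<And>x. poly g (qi q x) \<in> pzp p" "0 < c"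
  shows "\<one>\<^bsub>A_ring p q\<^esub> \<ominus>\<^bsub>A_ring p q\<^esub> A_of_poly q g [^]\<^bsub>A_ring p q\<^esub> c \<in> Units (A_ring p q)"
proof -
  have "\<one>\<^bsub>A_ring p q\<^esub> \<ominus>\<^bsub>A_ring p q\<^esub> A_of_poly q g [^]\<^bsub>A_ring p q\<^esub> c = A_of_poly q (1 - g ^ c)"
    using assms(1,2) by (simp add: one_A_ring A_of_poly_pow A_of_poly_diff zp_poly_power)
  moreover have "poly (1 - g ^ c) (qi q i) \<noteq> 0 \<and> inverse (poly (1 - g ^ c) (qi q i)) \<in> zp p" for i
    using one_minus_pzp_invertible[OF pzp_power[OF assms(3) assms(4)]] by simp
  ultimately show ?thesis
    using A_of_poly_in_Units assms(2) by (simp add: zp_poly_diff zp_poly_power)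
qed

section \<open>The roots \<open>q_i\<close> modulo \<open>p\<close>\<close>

lemma fermat_theorem_int: "[q ^ (p - 1) = 1] (mod int p)"
proof -
  interpret residues "int p" "residue_ring (int p)"
    using prime_gt_1_nat[OF p] by unfold_locales simp_all
  have "prime (int p)" using p by simp
  then have "coprime q (int p)"
    using q prime_imp_coprime coprime_commute by blast
  then show ?thesis
    using euler_theorem totient_prime[OF p] by simp
qed

lemma powi_in_zp: "of_int q powi k \<in> zp p"
  unfolding power_int_def using zp_inverse_of_int[OF q] by (simp add: zp_power)

lemma powi_diff_in_pzp:
  assumes "int (p - 1) dvd a - b"
  shows "of_int q powi a - of_int q powi b \<in> pzp p"
proof -
  have le: "of_int q powi a - of_int q powi b \<in> pzp p"
    if ba: "b \<le> a" and dvd: "int (p - 1) dvd a - b" for a b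
  proof -
    obtain k where k: "a - b = int (p - 1) * k" using dvd by (elim dvdE)
    have "0 \<le> int (p - 1) * k" using ba k by linarith
    moreover have "int (p - 1) > 0" using prime_gt_1_nat[OF p] by simp
    ultimately have "k \<ge> 0" by (metis zero_le_mult_iff linorder_not_le)
    define d where "d = (p - 1) * nat k"
    have a: "a = b + int d" unfolding d_def using k \<open>k \<ge> 0\<close> by simp
    have "[q ^ d = 1 ^ nat k] (mod int p)"
      unfolding d_def power_mult by (intro cong_pow fermat_theorem_int)
    then have "of_int (q ^ d - 1) \<in> pzp p"
      by (intro pzp_of_int) (simp add: cong_iff_dvd_diff)
    then have "of_int (q ^ d - 1) * of_int q powi b \<in> pzp p"
      using powi_in_zp by (rule pzp_mult)
    moreover have "q \<noteq> 0" using q by auto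
    ultimately show ?thesis
      unfolding a by (simp add: power_int_add algebra_simps)
  qed
  show ?thesis
  proof (cases "b \<le> a")
    case True
    then show ?thesis using le assms by blast
  next
    case False
    then have "of_int q powi b - of_int q powi a \<in> pzp p"
      using le assms by (simp add: dvd_diff_commute)
    then show ?thesis using pzp_uminus by fastforce
  qed
qed

lemma qi_eq_powi: "qi q i = of_int q powi (if even i then int (i div 2) else - int (i div 2))"
  unfolding qi_def power_int_def by (simp add: power_inverse)

lemma qi_cong_in_block: "\<exists>i \<in> {m+1..m+2*(p-1)}. qi q x - qi q i \<in> pzp p"
proof -
  define e where "e = (if even x then int (x div 2) else - int (x div 2))"
  define s where "s = int (m div 2) + 1"
  \<comment> \<open>the even indices \<open>2 * t\<close> of the block have \<open>qi q (2 * t) = q ^ t\<close> with \<open>t\<close> running through a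
     complete residue system modulo \<open>p - 1\<close>\<close>
  define t where "t = s + (e - s) mod int (p - 1)"
  have "int (p - 1) > 0" using prime_gt_1_nat[OF p] by simp
  then have t: "s \<le> t" "t < s + int (p - 1)" unfolding t_def by simp_all
  have "int (p - 1) dvd e - t"
    unfolding t_def using dvd_minus_mod[of "int (p - 1)" "e - s"] by (simp add: algebra_simps)
  then have "qi q x - qi q (2 * nat t) \<in> pzp p"
    using powi_diff_in_pzp[of e t] t unfolding s_def by (simp add: qi_eq_powi e_def)
  moreover have "2 * nat t \<in> {m+1..m+2*(p-1)}"
    using t unfolding s_def by auto
  ultimately show ?thesis by blast
qed

lemma poly_Theta_block_in_pzp: "poly (Theta_block q m (2*(p-1))) (qi q x) \<in> pzp p"
proof -
  define I where "I = {m+1..m+2*(p-1)}"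
  obtain i where i: "i \<in> I" "qi q x - qi q i \<in> pzp p"
    using qi_cong_in_block unfolding I_def by blast
  have "poly (Theta_block q m (2*(p-1))) (qi q x) = (qi q x - qi q i) * (\<Prod>k\<in>I - {i}. qi q x - qi q k)"
    using i(1) by (simp add: Theta_block_def poly_prod I_def prod.remove left_diff_distrib)
  moreover have "(\<Prod>k\<in>I - {i}. qi q x - qi q k) \<in> zp p"
    by (intro zp_prod zp_diff qi_in_zp)
  ultimately show ?thesis using i(2) pzp_mult by simp
qed

end

end

lemma not_dvd_of_residue_primroot:
  assumes p: "prime p" and "residue_primroot (p^2) (nat (q mod int (p^2)))"
  shows "\<not> int p dvd q"
proof
  assume "int p dvd q"
  then have "int p dvd q mod int (p^2)" by (simp add: dvd_mod power2_eq_square)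
  moreover have "q mod int (p^2) \<ge> 0" using prime_gt_0_nat[OF p] by simp
  ultimately have "int p dvd int (nat (q mod int (p^2)))" by simp
  then have "p dvd nat (q mod int (p^2))" by (simp only: of_nat_dvd_iff)
  moreover have "p dvd p^2" by (simp add: power2_eq_square)
  moreover have "coprime (p^2) (nat (q mod int (p^2)))"
    using assms(2) unfolding residue_primroot_def by blast
  ultimately have "is_unit p" by (metis coprime_common_divisor)
  then show False using p by simp
qed

theorem proposition3p5:
  fixes p :: nat and q :: int and M :: "(nat \<Rightarrow> rat poly, 'b) module"
  assumes "prime p" and "odd p"
    and "residue_primroot (p^2) (nat (q mod int (p^2)))"
    and "module (A_ring p q) M"
    and "finite (carrier M)"
  shows "\<exists>n. \<forall>m \<in> carrier M. Phi q n \<odot>\<^bsub>M\<^esub> m = \<zero>\<^bsub>M\<^esub>"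
proof -
  interpret module "A_ring p q" M by fact
  have q: "\<not> int p dvd q" using not_dvd_of_residue_primroot assms(1,3) .
  have cring: "cring (A_ring p q)" using assms(4) by (rule module.axioms(1))
  let ?E = "\<lambda>j. A_of_poly q (Theta q (2*(p-1)*j))"
  let ?B = "\<lambda>j. A_of_poly q (Theta_block q (2*(p-1)*j) (2*(p-1)))"
  have E: "?E j \<in> carrier (A_ring p q)" and B: "?B j \<in> carrier (A_ring p q)" for j
    using assms(1) q by (simp_all add: A_of_poly_in_carrier)
  have "\<exists>k :: nat. \<forall>m \<in> carrier M. ?B j [^]\<^bsub>A_ring p q\<^esub> k \<odot>\<^bsub>M\<^esub> m = \<zero>\<^bsub>M\<^esub>" for j
    using assms(5) B by (rule pow_smult_eventually_zero)
      (rule one_minus_pow_in_Units[OF assms(1) q cring Theta_block_in_zp_poly[OF assms(1) q]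
          poly_Theta_block_in_pzp[OF assms(1) q]])
  moreover have "?E (Suc j) = ?B j \<otimes>\<^bsub>A_ring p q\<^esub> ?E j" for j
  proof -
    have "2*(p-1) * Suc j = 2*(p-1)*j + 2*(p-1)" by simp
    then show ?thesis by (simp only: A_of_poly_mult Theta_add mult.commute)
  qed
  ultimately obtain j where "\<forall>m \<in> carrier M. ?E j \<odot>\<^bsub>M\<^esub> m = \<zero>\<^bsub>M\<^esub>"
    using smult_eq_zero_of_descending_chain[OF assms(5) E B] by blast
  then show ?thesis unfolding Phi_eq_A_of_poly by (intro exI[of _ "2*(p-1)*j"])
qed

end
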